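(* Let $g(S) = w(S) := \sum_{v \in S} w(v)$ for nonnegative weights $w : V \to \mathbb{R}_{\ge 0}$. Let $d > 0$ and let $S_d^*$ be a maximum-weight independent set of the intersection graph $G_d(V)$ among those of size at most $k$. If $T$ is an output of $\mathrm{GreedyIndependentSet}(V,g,d',k)$ with $0 \le d' \le d/2$, then $w(T) \ge w(S_d^* )$.
   Context: Let $V$ be a finite set of points in a metric space with metric $\mathrm{dist}$. For $u \in V$ and $S \subseteq V$ let $\mathrm{dist}(u,S) = \min_{v \in S}\mathrm{dist}(u,v)$, with $\mathrm{dist}(u,\emptyset) = \infty$. For $d \ge 0$, the intersection graph $G_d(V)$ has vertex set $V$ and edge set $\{\{u,v\} : u \ne v,\ \mathrm{dist}(u,v) < d\}$; thus $S$ is an independent set of $G_d(V)$ iff $\mathrm{dist}(u,v) \ge d$ for all distinct $u,v \in S$. Let $k \ge 1$ be an integer. $\mathrm{GreedyIndependentSet}(V,g,d,k)$: initialize $S \gets \emptyset$; for $i = 1,\dots,k$: let $C = \{v \in V\setminus S : \mathrm{dist}(v,S) \ge d\}$; if $C = \emptyset$ return $S$; otherwise pick $t \in \arg\max_{v \in C} \big(g(S\cup\{v\}) - g(S)\big)$ (ties broken arbitrarily) and set $S \gets S \cup\{t\}$. After the loop, return $S$. *)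

theory Defs
  imports "HOL-Analysis.Analysis"
begin

text \<open>Independent set of the intersection graph G_d(V): pairwise distances at least d.\<close>
definition indep_set :: "'a::metric_space set \<Rightarrow> real \<Rightarrow> 'a set \<Rightarrow> bool" where
  "indep_set V d S \<longleftrightarrow> S \<subseteq> V \<and> (\<forall>u\<in>S. \<forall>v\<in>S. u \<noteq> v \<longrightarrow> dist u v \<ge> d)"

text \<open>Candidate set C = {v in V - S. dist(v,S) >= d}, with dist(v,{}) = infinity.\<close>
definition greedy_cand :: "'a::metric_space set \<Rightarrow> real \<Rightarrow> 'a set \<Rightarrow> 'a set" where
  "greedy_cand V d S = {v \<in> V - S. \<forall>u\<in>S. dist v u \<ge> d}"

text \<open>All possible results of running n remaining loop iterations from the current set S
  (ties broken arbitrarily, so the result is a set of possible outputs).\<close>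
fun greedy_from :: "'a::metric_space set \<Rightarrow> ('a set \<Rightarrow> real) \<Rightarrow> real \<Rightarrow> nat \<Rightarrow> 'a set \<Rightarrow> 'a set set" where
  "greedy_from V g d 0 S = {S}"
| "greedy_from V g d (Suc n) S =
     (let C = greedy_cand V d S in
      if C = {} then {S}
      else (\<Union>t \<in> {t \<in> C. \<forall>v\<in>C. g (S \<union> {v}) - g S \<le> g (S \<union> {t}) - g S}.
              greedy_from V g d n (insert t S)))"

definition greedy_outputs :: "'a::metric_space set \<Rightarrow> ('a set \<Rightarrow> real) \<Rightarrow> real \<Rightarrow> nat \<Rightarrow> 'a set set" where
  "greedy_outputs V g d k = greedy_from V g d k {}"

end

theory Submission
  imports Defs
begin

text \<open>Greedy always adds a heaviest admissible point t. A d-independent set B of points still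
  admissible for the d'-greedy has at most one point within distance d' of t, since two such
  points would be closer than 2d' \<le> d to each other. So each greedy step makes at most one
  point of B inadmissible while gaining w t, which is at least that point's weight; by
  induction the output outweighs every d-independent set of at most k points.\<close>

lemma indep_set_subset: "indep_set V d S \<Longrightarrow> B \<subseteq> S \<Longrightarrow> indep_set V d B"
  by (auto simp: indep_set_def)

lemma indep_set_finite: "finite V \<Longrightarrow> indep_set V d S \<Longrightarrow> finite S"
  unfolding indep_set_def using finite_subset by auto

lemma indep_set_eq_if_near:
  assumes "indep_set V d S" "b \<in> S" "s \<in> S" "dist b t < d / 2" "dist s t < d / 2"
  shows "b = s"
proof (rule ccontr)
  assume "b \<noteq> s"
  then have "d \<le> dist b s" using assms(1-3) unfolding indep_set_def by simp
  also have "\<dots> \<le> dist b t + dist s t" by (rule dist_triangle2)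
  finally show False using assms(4,5) by linarith
qed

lemma greedy_cand_insert:
  "greedy_cand V d (insert t S) = {v \<in> greedy_cand V d S. v \<noteq> t \<and> d \<le> dist v t}"
  unfolding greedy_cand_def by (auto simp: dist_commute)

lemma indep_set_all_far_but_one:
  assumes "indep_set V d B" "B \<noteq> {}" "0 < d" "d' \<le> d / 2"
  obtains s where "s \<in> B" "\<forall>b \<in> B - {s}. b \<noteq> t \<and> d' \<le> dist b t"
proof (cases "\<exists>s\<in>B. s = t \<or> dist s t < d'")
  case True
  then obtain s where s: "s \<in> B" "s = t \<or> dist s t < d'" by blast
  have near: "dist x t < d / 2" if "x = t \<or> dist x t < d'" for x
    using that assms(3,4) by auto
  have "b \<noteq> t \<and> d' \<le> dist b t" if "b \<in> B - {s}" for b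
  proof (rule ccontr)
    assume "\<not> (b \<noteq> t \<and> d' \<le> dist b t)"
    then have "b = s" using indep_set_eq_if_near[OF assms(1) _ s(1) near near[OF s(2)]] that by auto
    with that show False by simp
  qed
  with s(1) show ?thesis using that by blast
next
  case False
  then have "\<forall>b \<in> B. b \<noteq> t \<and> d' \<le> dist b t" by auto
  with assms(2) that show ?thesis by blast
qed

lemma greedy_from_Suc_sumE:
  assumes "T \<in> greedy_from V (\<lambda>S. sum w S) d (Suc n) S" "finite S"
  obtains "T = S" "greedy_cand V d S = {}"
  | t where "t \<in> greedy_cand V d S" "\<forall>v \<in> greedy_cand V d S. w v \<le> w t"
      "T \<in> greedy_from V (\<lambda>S. sum w S) d n (insert t S)"
proof (cases "greedy_cand V d S = {}")
  case True
  with assms(1) that(1) show ?thesis by (simp add: Let_def)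
next
  case False
  have gain: "sum w (insert v S) = sum w S + w v" if "v \<in> greedy_cand V d S" for v
    using that assms(2) unfolding greedy_cand_def by simp
  from assms(1) False obtain t where "t \<in> greedy_cand V d S"
      "\<forall>v \<in> greedy_cand V d S. w v \<le> w t"
      "T \<in> greedy_from V (\<lambda>S. sum w S) d n (insert t S)"
    by (auto simp: Let_def gain)
  with that(2) show ?thesis by blast
qed

lemma greedy_from_sum_ge:
  fixes w :: "'a::metric_space \<Rightarrow> real"
  assumes "finite V" "\<forall>v\<in>V. 0 \<le> w v" "0 < d" "d' \<le> d / 2"
  shows "T \<in> greedy_from V (\<lambda>S. sum w S) d' n S \<Longrightarrow> finite S \<Longrightarrow> indep_set V d B
    \<Longrightarrow> B \<subseteq> greedy_cand V d' S \<Longrightarrow> card B \<le> n \<Longrightarrow> sum w S + sum w B \<le> sum w T"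
proof (induction n arbitrary: S B)
  case 0
  have "finite B" using assms(1) \<open>indep_set V d B\<close> by (rule indep_set_finite)
  with 0 show ?case by simp
next
  case (Suc n)
  have finB: "finite B" using assms(1) \<open>indep_set V d B\<close> by (rule indep_set_finite)
  from Suc.prems(1,2) show ?case
  proof (cases rule: greedy_from_Suc_sumE)
    case 1
    with Suc.prems(4) show ?thesis by simp
  next
    case (2 t)
    have "t \<in> V" "t \<notin> S" using 2(1) unfolding greedy_cand_def by auto
    then have sum_insert: "sum w (insert t S) = w t + sum w S" using Suc.prems(2) by simp
    show ?thesis
    proof (cases "B = {}")
      case True
      have "sum w (insert t S) \<le> sum w T"
        using Suc.IH[OF 2(3), of "{}"] Suc.prems(2) by (simp add: indep_set_def)
      moreover have "0 \<le> w t" using assms(2) \<open>t \<in> V\<close> by simp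
      ultimately show ?thesis using True sum_insert by simp
    next
      case False
      obtain s where s: "s \<in> B" and far: "\<forall>b \<in> B - {s}. b \<noteq> t \<and> d' \<le> dist b t"
        using indep_set_all_far_but_one[OF Suc.prems(3) False assms(3,4)] .
      have "B - {s} \<subseteq> greedy_cand V d' (insert t S)"
        using far Suc.prems(4) by (auto simp: greedy_cand_insert)
      moreover have "indep_set V d (B - {s})"
        using Suc.prems(3) by (rule indep_set_subset) blast
      moreover have "card (B - {s}) \<le> n" using Suc.prems(5) s finB by simp
      ultimately have "sum w (insert t S) + sum w (B - {s}) \<le> sum w T"
        using Suc.IH[OF 2(3)] Suc.prems(2) by simp
      moreover have "sum w B = w s + sum w (B - {s})" using finB s by (simp add: sum.remove)
      moreover have "w s \<le> w t" using 2(2) s Suc.prems(4) by blast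
      ultimately show ?thesis using sum_insert by linarith
    qed
  qed
qed

theorem lemmaC1:
  fixes V :: "'a::metric_space set" and w :: "'a \<Rightarrow> real"
    and d d' :: real and k :: nat and Sstar T :: "'a set"
  assumes "finite V"
    and "\<forall>v\<in>V. w v \<ge> 0"
    and "k \<ge> 1"
    and "d > 0"
    and "0 \<le> d'" and "d' \<le> d / 2"
    and "indep_set V d Sstar" and "card Sstar \<le> k"
    and "\<forall>S. indep_set V d S \<and> card S \<le> k \<longrightarrow> (\<Sum>v\<in>S. w v) \<le> (\<Sum>v\<in>Sstar. w v)"
    and "T \<in> greedy_outputs V (\<lambda>S. \<Sum>v\<in>S. w v) d' k"
  shows "(\<Sum>v\<in>T. w v) \<ge> (\<Sum>v\<in>Sstar. w v)"
proof -
  have "Sstar \<subseteq> greedy_cand V d' {}"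
    using assms(7) unfolding indep_set_def greedy_cand_def by auto
  moreover have "T \<in> greedy_from V (\<lambda>S. sum w S) d' k {}"
    using assms(10) unfolding greedy_outputs_def .
  ultimately have "sum w {} + sum w Sstar \<le> sum w T"
    using greedy_from_sum_ge[OF assms(1,2,4,6)] assms(7,8) by blast
  then show ?thesis by simp
qed

end
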